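(* Fix $\alpha\in(0,1)$. In the two-sided weakly dependent Gaussian testing model described in the context, suppose $n_1\to\infty$ and $n_1/n\to p_1\in(0,1]$ as $n\to\infty$, and let $\mu_{(n_1)}=\max_{i\in\mathcal I_1}|\mu_i|$. If $\lim_{n_1\to\infty}\frac{\sqrt{2\log n_1}}{\mu_{(n_1)}}$ exists and is strictly less than $1$, then for both the two-sided adjusted Bonferroni procedure and the two-sided Sidak procedure, $\lim_{n\to\infty}AnyPwr_{BS}=1$.
   Context: $\Phi$ denotes the standard normal distribution function. Let $(\rho_{ij})_{i,j\ge1}$ be a symmetric array with $\rho_{ii}=1$ and $\rho_{ij}\in(-1,1)$ for $i\ne j$, such that for each $n$ the matrix $\Sigma_n=(\rho_{ij})_{1\le i,j\le n}$ is a valid correlation matrix. Put $\rho_m=\sup_{i\ge1}|\rho_{i,\,i+m}|$ and assume the weak dependence condition: $\gamma:=\sup_{m\ge 1}\rho_m<1$ and $\rho_m=o(1/\log m)$ as $m\to\infty$. For each $n$ one observes $(X_1,\dots,X_n)$, jointly Gaussian with $\mathbb{E}X_i=\mu_i$ (the means may depend on $n$), $\mathrm{Var}(X_i)=1$ and correlation matrix $\Sigma_n$. One tests $H_{0i}:\mu_i=0$ versus $H_{1i}:\mu_i\neq0$, $i=1,\dots,n$. Let $\mathcal I_1=\{i\le n:\mu_i\ne0\}$, $n_1=|\mathcal I_1|$. Define $c_{Bon}(m,\alpha):=\Phi^{-1}\bigl(1-\frac{-\log(1-\alpha)}{m}\bigr)$ and $c_{Sid}(m,\alpha):=\Phi^{-1}\bigl((1-\alpha)^{1/m}\bigr)$.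 The two-sided adjusted Bonferroni procedure rejects $H_{0i}$ iff $|X_i|>c_{Bon}(2n,\alpha)$; the two-sided Sidak procedure rejects $H_{0i}$ iff $|X_i|>c_{Sid}(2n,\alpha)$. For a procedure rejecting when $|X_i|>c$, $AnyPwr_{BS}=\mathbb{P}\bigl(|X_i|>c\text{ for some }i\in\mathcal I_1\bigr)$. *)

theory Defs
  imports "HOL-Probability.Probability" "HOL-Library.Landau_Symbols"
begin

definition Phi :: "real \<Rightarrow> real" where
  "Phi x = measure (density lborel std_normal_density) {..x}"

definition Phi_inv :: "real \<Rightarrow> real" where
  "Phi_inv p = (THE x. Phi x = p)"

definition c_Bon :: "real \<Rightarrow> real \<Rightarrow> real" where
  "c_Bon m \<alpha> = Phi_inv (1 - (- ln (1 - \<alpha>)) / m)"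

definition c_Sid :: "real \<Rightarrow> real \<Rightarrow> real" where
  "c_Sid m \<alpha> = Phi_inv ((1 - \<alpha>) powr (1 / m))"

definition gaussian_rv :: "'a measure \<Rightarrow> ('a \<Rightarrow> real) \<Rightarrow> real \<Rightarrow> real \<Rightarrow> bool" where
  "gaussian_rv M Y m v \<longleftrightarrow> Y \<in> borel_measurable M \<and> 0 \<le> v \<and>
     (if v = 0 then (AE \<omega> in M. Y \<omega> = m)
      else distributed M lborel Y (normal_density m (sqrt v)))"

text \<open>(X_1,...,X_n) jointly Gaussian with means mu_i, unit variances and
  correlations rho_ij: every linear combination is Gaussian with the
  corresponding mean and variance.\<close>
definition jointly_gaussian ::
  "'a measure \<Rightarrow> (nat \<Rightarrow> 'a \<Rightarrow> real) \<Rightarrow> (nat \<Rightarrow> real) \<Rightarrow> (nat \<Rightarrow> nat \<Rightarrow> real) \<Rightarrow> nat \<Rightarrow> bool" where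
  "jointly_gaussian M X mu rho n \<longleftrightarrow>
     (\<forall>a :: nat \<Rightarrow> real.
        gaussian_rv M (\<lambda>\<omega>. \<Sum>i=1..n. a i * X i \<omega>)
          (\<Sum>i=1..n. a i * mu i)
          (\<Sum>i=1..n. \<Sum>j=1..n. a i * a j * rho i j))"

definition rho_lag :: "(nat \<Rightarrow> nat \<Rightarrow> real) \<Rightarrow> nat \<Rightarrow> real" where
  "rho_lag rho m = (SUP i\<in>{1..}. \<bar>rho i (i + m)\<bar>)"

definition I1 :: "(nat \<Rightarrow> real) \<Rightarrow> nat \<Rightarrow> nat set" where
  "I1 mu n = {i \<in> {1..n}. mu i \<noteq> 0}"

definition AnyPwr :: "'a measure \<Rightarrow> (nat \<Rightarrow> 'a \<Rightarrow> real) \<Rightarrow> nat set \<Rightarrow> real \<Rightarrow> real" where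
  "AnyPwr M X I c = prob_space.prob M {\<omega> \<in> space M. \<exists>i\<in>I. \<bar>X i \<omega>\<bar> > c}"

end

theory Submission
  imports Defs "HOL-Real_Asymp.Real_Asymp"
begin

(* If i is a non-null index with |mu_i| = mu_(n1), then
   AnyPwr >= P(|X_i| > c) >= 1 - 2 exp(-(mu_(n1) - c)^2/2) by the Gaussian tail bound
   P(|Y - m| >= d) <= 2 exp(-d^2/2), so the power tends to 1 as soon as mu_(n1) - c -> oo.
   The same tail bound shows that both critical values are at most sqrt(2 log(16 n / beta)),
   beta = -log(1 - alpha). Since eventually n < 2 n1 / p1 and mu_(n1) > sqrt(2 log n1) / L'
   for some L' < 1, the margin mu_(n1) - c grows like (1/L' - 1) sqrt(2 log n1). *)

lemma normal_density_tail_le_shifted: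
  fixes d m x :: real
  assumes d: "0 \<le> d"
  shows "normal_density m 1 x * indicator {x. d \<le> \<bar>x - m\<bar>} x
     \<le> exp (-(d^2)/2) * (normal_density (m + d) 1 x + normal_density (m - d) 1 x)"
proof (cases "d \<le> \<bar>x - m\<bar>")
  case False
  then show ?thesis by (simp add: add_nonneg_nonneg)
next
  case True
  define y where "y = x - m"
  (* y^2 = d^2 + (|y| - d)^2 + 2 d (|y| - d) and the last term is nonnegative *)
  have "exp (-(y^2)/2) \<le> exp (-(d^2)/2) * exp (-((\<bar>y\<bar> - d)^2)/2)"
  proof -
    have "0 \<le> d * (\<bar>y\<bar> - d)" using True d unfolding y_def by simp
    then have "-(y^2)/2 \<le> -(d^2)/2 + -((\<bar>y\<bar> - d)^2)/2"
      by (simp add: power2_eq_square algebra_simps abs_mult_self)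
    then show ?thesis by (simp flip: exp_add)
  qed
  also have "\<dots> \<le> exp (-(d^2)/2) * (exp (-((y - d)^2)/2) + exp (-((y + d)^2)/2))"
  proof -
    have "(\<bar>y\<bar> - d)^2 = (y - d)^2 \<or> (\<bar>y\<bar> - d)^2 = (y + d)^2"
      by (cases "0 \<le> y") (simp_all add: power2_eq_square algebra_simps)
    then show ?thesis by (auto intro: add_increasing add_increasing2)
  qed
  finally have "exp (-(y^2)/2) / sqrt (2*pi)
      \<le> exp (-(d^2)/2) * (exp (-((y - d)^2)/2) + exp (-((y + d)^2)/2)) / sqrt (2*pi)"
    by (simp add: divide_right_mono)
  then show ?thesis
    using True by (simp add: normal_density_def y_def add_divide_distrib algebra_simps)
qed

lemma normal_density_tail_bound:
  fixes d m :: real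
  assumes d: "0 \<le> d"
  shows "measure (density lborel (normal_density m 1)) {x. d \<le> \<bar>x - m\<bar>} \<le> 2 * exp (-(d^2)/2)"
proof -
  have [measurable]: "{x. d \<le> \<bar>x - m\<bar>} \<in> sets borel" by measurable
  have "emeasure (density lborel (normal_density m 1)) {x. d \<le> \<bar>x - m\<bar>}
      = (\<integral>\<^sup>+x. ennreal (normal_density m 1 x) * indicator {x. d \<le> \<bar>x - m\<bar>} x \<partial>lborel)"
    by (simp add: emeasure_density)
  also have "\<dots> \<le> (\<integral>\<^sup>+x. ennreal (exp (-(d^2)/2))
                      * (ennreal (normal_density (m + d) 1 x) + ennreal (normal_density (m - d) 1 x)) \<partial>lborel)"
  proof (rule nn_integral_mono)
    fix x
    have "ennreal (normal_density m 1 x) * indicator {x. d \<le> \<bar>x - m\<bar>} x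
        = ennreal (normal_density m 1 x * indicator {x. d \<le> \<bar>x - m\<bar>} x)"
      by (simp add: indicator_def)
    also have "\<dots> \<le> ennreal (exp (-(d^2)/2) * (normal_density (m + d) 1 x + normal_density (m - d) 1 x))"
      using normal_density_tail_le_shifted[OF d] by (rule ennreal_leI)
    finally show "ennreal (normal_density m 1 x) * indicator {x. d \<le> \<bar>x - m\<bar>} x
        \<le> ennreal (exp (-(d^2)/2)) * (ennreal (normal_density (m + d) 1 x) + ennreal (normal_density (m - d) 1 x))"
      by (simp add: ennreal_mult flip: ennreal_plus)
  qed
  also have "\<dots> = ennreal (2 * exp (-(d^2)/2))"
    by (simp add: nn_integral_cmult nn_integral_add nn_integral_eq_integral ennreal_mult
        one_add_one mult.commute)
  finally show ?thesis
    by (simp add: measure_def enn2real_leI)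
qed

lemma Phi_eq_cdf: "Phi = cdf std_normal_distribution"
  by (simp add: Phi_def[abs_def] cdf_def)

interpretation std_normal: real_distribution std_normal_distribution
  by (rule real_dist_normal_dist)

lemma isCont_Phi: "isCont Phi x"
proof -
  have "measure std_normal_distribution {x} = 0"
    by (simp add: measure_def emeasure_density)
  then show ?thesis
    unfolding Phi_eq_cdf by (simp add: std_normal.isCont_cdf)
qed

lemma Phi_at_top: "(Phi \<longlongrightarrow> 1) at_top"
  unfolding Phi_eq_cdf by (rule std_normal.cdf_lim_at_top_prob)

lemma Phi_at_bot: "(Phi \<longlongrightarrow> 0) at_bot"
  unfolding Phi_eq_cdf by (rule std_normal.cdf_lim_at_bot)

lemma strict_mono_Phi: "strict_mono Phi"
proof (rule strict_monoI)
  fix x y :: real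
  assume xy: "x < y"
  define k where "k = exp (-(x^2 + y^2)/2) / sqrt (2*pi)"
  have k: "0 < k" by (simp add: k_def)
  have "k \<le> std_normal_density t" if "t \<in> {x<..y}" for t
  proof -
    have "t^2 \<le> x^2 + y^2"
    proof (cases "0 \<le> t")
      case True
      then have "t^2 \<le> y^2" using that by (intro power_mono) auto
      then show ?thesis by (simp add: add_increasing)
    next
      case False
      then have "(-t)^2 \<le> (-x)^2" using that by (intro power_mono) auto
      then show ?thesis by (simp add: add_increasing2)
    qed
    then show ?thesis unfolding k_def std_normal_density_def by (simp add: divide_right_mono)
  qed
  then have "(\<integral>\<^sup>+t. ennreal k * indicator {x<..y} t \<partial>lborel)
      \<le> (\<integral>\<^sup>+t. ennreal (std_normal_density t) * indicator {x<..y} t \<partial>lborel)"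
    by (intro nn_integral_mono) (simp add: indicator_def ennreal_leI)
  then have "ennreal (k * (y - x)) \<le> emeasure std_normal_distribution {x<..y}"
    using xy k by (simp add: emeasure_density nn_integral_cmult_indicator ennreal_mult)
  moreover have "0 < k * (y - x)" using xy k by simp
  moreover have "Phi y - Phi x = measure std_normal_distribution {x<..y}"
    unfolding Phi_eq_cdf using std_normal.cdf_diff_eq[OF xy] by simp
  ultimately show "Phi x < Phi y"
    by (simp add: std_normal.emeasure_eq_measure)
qed

lemma Phi_Phi_inv:
  assumes "0 < p" "p < 1"
  shows "Phi (Phi_inv p) = p"
proof -
  obtain a where a: "Phi a < p"
    using order_tendstoD(2)[OF Phi_at_bot assms(1)] by (auto simp: eventually_at_bot_linorder)
  obtain b where b: "p < Phi b"
    using order_tendstoD(1)[OF Phi_at_top assms(2)] by (auto simp: eventually_at_top_linorder)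
  have "a \<le> b" using a b strict_mono_less[OF strict_mono_Phi, of b a] by linarith
  then obtain x where x: "Phi x = p"
    using IVT[of Phi a p b] a b isCont_Phi by force
  have "\<exists>!x. Phi x = p"
    using x strict_mono_eq[OF strict_mono_Phi] by metis
  then show ?thesis unfolding Phi_inv_def by (rule theI')
qed

lemma one_minus_Phi_le:
  assumes "0 \<le> t"
  shows "1 - Phi t \<le> 2 * exp (-(t^2)/2)"
proof -
  have "1 - Phi t = std_normal.prob (UNIV - {..t})"
    unfolding Phi_def using std_normal.prob_compl[of "{..t}"] by simp
  also have "\<dots> \<le> std_normal.prob {x. t \<le> \<bar>x - 0\<bar>}"
    by (intro std_normal.finite_measure_mono) auto
  also have "\<dots> \<le> 2 * exp (-(t^2)/2)" by (rule normal_density_tail_bound[OF assms])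
  finally show ?thesis .
qed

lemma Phi_inv_less_sqrt_ln:
  assumes p: "0 < p" "p < 1" and \<delta>: "0 < \<delta>" "\<delta> \<le> 1 - p"
  shows "Phi_inv p < sqrt (2 * ln (4 / \<delta>))"
proof -
  define t where "t = sqrt (2 * ln (4 / \<delta>))"
  have ln: "0 \<le> ln (4 / \<delta>)" using \<delta> p by simp
  then have "exp (-(t^2)/2) = \<delta> / 4"
    using \<delta> by (simp add: t_def exp_minus)
  then have "1 - Phi t \<le> \<delta> / 2" using one_minus_Phi_le[of t] ln by (simp add: t_def)
  also have "\<dots> < 1 - Phi (Phi_inv p)" using Phi_Phi_inv[OF p] \<delta> by simp
  finally show ?thesis
    unfolding t_def[symmetric] using strict_mono_less[OF strict_mono_Phi] by simp
qed

lemma c_Bon_less: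
  assumes \<alpha>: "0 < \<alpha>" "\<alpha> < 1" and m: "- ln (1 - \<alpha>) < m"
  shows "c_Bon m \<alpha> < sqrt (2 * ln (8 * m / - ln (1 - \<alpha>)))"
proof -
  define \<beta> where "\<beta> = - ln (1 - \<alpha>)"
  have \<beta>: "0 < \<beta>" using \<alpha> by (simp add: \<beta>_def)
  have "Phi_inv (1 - \<beta> / m) < sqrt (2 * ln (4 / (\<beta> / (2 * m))))"
    using \<beta> m by (intro Phi_inv_less_sqrt_ln) (auto simp: \<beta>_def field_simps)
  then show ?thesis
    using \<beta> by (simp add: c_Bon_def field_simps flip: \<beta>_def)
qed

lemma c_Sid_less:
  assumes \<alpha>: "0 < \<alpha>" "\<alpha> < 1" and m: "- ln (1 - \<alpha>) < m"
  shows "c_Sid m \<alpha> < sqrt (2 * ln (8 * m / - ln (1 - \<alpha>)))"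
proof -
  define \<beta> where "\<beta> = - ln (1 - \<alpha>)"
  define x where "x = \<beta> / m"
  have "0 < \<beta>" using \<alpha> by (simp add: \<beta>_def)
  then have x: "0 < x" "x < 1" using m by (simp_all add: x_def flip: \<beta>_def)
  have "(1 - \<alpha>) powr (1 / m) = exp (- x)"
    using \<alpha> by (simp add: x_def \<beta>_def powr_def)
  moreover have "x / 2 \<le> 1 - exp (- x)"
  proof -
    have "exp (- x) \<le> 1 / (1 + x)"
      using exp_ge_add_one_self[of x] x by (simp add: exp_minus field_simps)
    also have "\<dots> \<le> 1 - x / 2"
      using x by (simp add: field_simps mult_left_le)
    finally show ?thesis by simp
  qed
  then have "Phi_inv (exp (- x)) < sqrt (2 * ln (4 / (x / 2)))"
    using x by (intro Phi_inv_less_sqrt_ln) auto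
  moreover have "4 / (x / 2) = 8 * m / - ln (1 - \<alpha>)"
    using \<alpha> m by (simp add: x_def field_simps flip: \<beta>_def)
  ultimately show ?thesis by (simp add: c_Sid_def flip: \<beta>_def)
qed

lemma critical_values_eventually_le:
  assumes "0 < \<alpha>" "\<alpha> < 1"
  shows "eventually (\<lambda>n. c_Bon (2 * real n) \<alpha> \<le> sqrt (2 * ln (16 / - ln (1 - \<alpha>) * real n)) \<and>
                        c_Sid (2 * real n) \<alpha> \<le> sqrt (2 * ln (16 / - ln (1 - \<alpha>) * real n)))
           sequentially"
proof -
  have "eventually (\<lambda>n. - ln (1 - \<alpha>) < 2 * real n) sequentially" by real_asymp
  then show ?thesis
  proof eventually_elim
    case (elim n)
    have "8 * (2 * real n) / - ln (1 - \<alpha>) = 16 / - ln (1 - \<alpha>) * real n" by simp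
    with c_Bon_less[OF assms elim] c_Sid_less[OF assms elim] show ?case by simp
  qed
qed

lemma jointly_gaussian_marginal:
  assumes jg: "jointly_gaussian M X mu rho n" and i: "i \<in> {1..n}" and rho: "rho i i = 1"
  shows "distributed M lborel (X i) (\<lambda>x. ennreal (normal_density (mu i) 1 x))"
    and "X i \<in> borel_measurable M"
proof -
  define a where "a j = (if j = i then 1 else 0 :: real)" for j
  have pick: "(\<Sum>j=1..n. a j * f j) = f i" for f :: "nat \<Rightarrow> real"
  proof -
    have "(\<Sum>j=1..n. a j * f j) = (\<Sum>j\<in>{1..n}. if j = i then f j else 0)"
      by (rule sum.cong) (simp_all add: a_def)
    then show ?thesis using i by simp
  qed
  have "(\<Sum>j=1..n. \<Sum>k=1..n. a j * a k * rho j k) = (\<Sum>j=1..n. a j * (\<Sum>k=1..n. a k * rho j k))"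
    by (simp add: sum_distrib_left mult.assoc)
  also have "\<dots> = (\<Sum>k=1..n. a k * rho i k)" by (rule pick)
  also have "\<dots> = rho i i" by (rule pick)
  also have "\<dots> = 1" by (rule rho)
  finally have var: "(\<Sum>j=1..n. \<Sum>k=1..n. a j * a k * rho j k) = 1" .
  have "gaussian_rv M (\<lambda>\<omega>. \<Sum>j=1..n. a j * X j \<omega>) (\<Sum>j=1..n. a j * mu j)
      (\<Sum>j=1..n. \<Sum>k=1..n. a j * a k * rho j k)"
    using jg unfolding jointly_gaussian_def by blast
  then have "gaussian_rv M (X i) (mu i) 1"
    unfolding pick var .
  then show "distributed M lborel (X i) (\<lambda>x. ennreal (normal_density (mu i) 1 x))"
    and "X i \<in> borel_measurable M"
    by (auto simp: gaussian_rv_def)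
qed

lemma (in prob_space) prob_abs_gt_ge_normal:
  assumes Y: "distributed M lborel Y (\<lambda>x. ennreal (normal_density m 1 x))" and c: "c \<le> \<bar>m\<bar>"
  shows "1 - 2 * exp (-((\<bar>m\<bar> - c)^2)/2) \<le> prob {\<omega> \<in> space M. c < \<bar>Y \<omega>\<bar>}"
proof -
  have [measurable]: "Y \<in> borel_measurable M" using distributed_measurable[OF Y] by simp
  have "prob {\<omega> \<in> space M. \<bar>Y \<omega>\<bar> \<le> c} \<le> prob (Y -` {x. \<bar>m\<bar> - c \<le> \<bar>x - m\<bar>} \<inter> space M)"
    by (intro finite_measure_mono) auto
  also have "\<dots> = measure (density lborel (normal_density m 1)) {x. \<bar>m\<bar> - c \<le> \<bar>x - m\<bar>}"
    by (simp add: measure_distr flip: distributed_distr_eq_density[OF Y])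
  also have "\<dots> \<le> 2 * exp (-((\<bar>m\<bar> - c)^2)/2)"
    using c by (intro normal_density_tail_bound) simp
  moreover have "space M - {\<omega> \<in> space M. \<bar>Y \<omega>\<bar> \<le> c} = {\<omega> \<in> space M. c < \<bar>Y \<omega>\<bar>}"
    by auto
  ultimately show ?thesis
    using prob_compl[of "{\<omega> \<in> space M. \<bar>Y \<omega>\<bar> \<le> c}"] by simp
qed

lemma prob_le_AnyPwr:
  assumes "prob_space M" and I: "finite I" "\<And>i. i \<in> I \<Longrightarrow> X i \<in> borel_measurable M"
    and i: "i \<in> I"
  shows "prob_space.prob M {\<omega> \<in> space M. c < \<bar>X i \<omega>\<bar>} \<le> AnyPwr M X I c"
proof -
  interpret prob_space M by fact
  have "{\<omega> \<in> space M. \<exists>i\<in>I. c < \<bar>X i \<omega>\<bar>} = (\<Union>i\<in>I. {\<omega> \<in> space M. c < \<bar>X i \<omega>\<bar>})"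
    by auto
  also have "\<dots> \<in> events"
    using I by (intro sets.finite_UN) auto
  finally show ?thesis
    unfolding AnyPwr_def using i by (intro finite_measure_mono) auto
qed

lemma AnyPwr_tendsto_1:
  fixes M :: "nat \<Rightarrow> 'a measure" and X :: "nat \<Rightarrow> nat \<Rightarrow> 'a \<Rightarrow> real"
  assumes prob: "\<And>n. prob_space (M n)"
    and gauss: "\<And>n. jointly_gaussian (M n) (X n) (mu n) rho n" and rho: "\<And>i. rho i i = 1"
    and I: "\<And>n. I n \<subseteq> {1..n}" and nonempty: "eventually (\<lambda>n. I n \<noteq> {}) sequentially"
    and margin: "filterlim (\<lambda>n. Max ((\<lambda>i. \<bar>mu n i\<bar>) ` I n) - c n) at_top sequentially"
  shows "(\<lambda>n. AnyPwr (M n) (X n) (I n) (c n)) \<longlonglongrightarrow> 1"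
proof (rule tendsto_sandwich)
  define g where "g = (\<lambda>n. Max ((\<lambda>i. \<bar>mu n i\<bar>) ` I n) - c n)"
  have "((\<lambda>x::real. 1 - 2 * exp (-(x^2)/2)) \<longlongrightarrow> 1) at_top" by real_asymp
  moreover have g: "filterlim g at_top sequentially" using margin by (simp add: g_def)
  ultimately show "(\<lambda>n. 1 - 2 * exp (-((g n)^2)/2)) \<longlonglongrightarrow> 1"
    by (rule filterlim_compose)
  show "eventually (\<lambda>n. 1 - 2 * exp (-((g n)^2)/2) \<le> AnyPwr (M n) (X n) (I n) (c n)) sequentially"
    using nonempty g[unfolded filterlim_at_top, THEN spec, of 0]
  proof eventually_elim
    case (elim n)
    have fin: "finite (I n)" using I finite_subset by blast
    then have "Max ((\<lambda>i. \<bar>mu n i\<bar>) ` I n) \<in> (\<lambda>i. \<bar>mu n i\<bar>) ` I n"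
      using elim(1) by (intro Max_in) auto
    then obtain i where i: "i \<in> I n" "\<bar>mu n i\<bar> = Max ((\<lambda>i. \<bar>mu n i\<bar>) ` I n)"
      by auto
    have marginal: "distributed (M n) lborel (X n j) (\<lambda>x. ennreal (normal_density (mu n j) 1 x))"
      "X n j \<in> borel_measurable (M n)" if "j \<in> I n" for j
      using jointly_gaussian_marginal[OF gauss subsetD[OF I that] rho] by simp_all
    have "1 - 2 * exp (-((g n)^2)/2) \<le> prob_space.prob (M n) {\<omega> \<in> space (M n). c n < \<bar>X n i \<omega>\<bar>}"
      using prob_space.prob_abs_gt_ge_normal[OF prob marginal(1)[OF i(1)]] elim(2) i(2)
      by (simp add: g_def)
    also have "\<dots> \<le> AnyPwr (M n) (X n) (I n) (c n)"
      using prob fin marginal(2) i(1) by (rule prob_le_AnyPwr)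
    finally show ?case .
  qed
  show "eventually (\<lambda>n. AnyPwr (M n) (X n) (I n) (c n) \<le> 1) sequentially"
    by (simp add: AnyPwr_def prob_space.prob_le_1[OF prob])
qed (rule tendsto_const)

lemma sqrt_ln_mult_le:
  fixes a x :: real
  assumes "0 < a" "1 \<le> x"
  shows "sqrt (2 * ln (a * x)) \<le> sqrt \<bar>2 * ln a\<bar> + sqrt (2 * ln x)"
proof -
  have "sqrt (2 * ln (a * x)) \<le> sqrt (\<bar>2 * ln a\<bar> + 2 * ln x)"
    using assms by (simp add: ln_mult)
  also have "\<dots> \<le> sqrt \<bar>2 * ln a\<bar> + sqrt (2 * ln x)"
    using assms by (intro sqrt_add_le_add_sqrt) auto
  finally show ?thesis .
qed

lemma margin_over_sqrt_ln_at_top: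
  fixes N :: "nat \<Rightarrow> nat" and m :: "nat \<Rightarrow> real" and K p L :: real
  assumes N: "filterlim N at_top sequentially"
    and frac: "(\<lambda>n. real (N n) / real n) \<longlonglongrightarrow> p" and p: "0 < p"
    and m: "eventually (\<lambda>n. 0 < m n) sequentially"
    and ratio: "(\<lambda>n. sqrt (2 * ln (real (N n))) / m n) \<longlonglongrightarrow> L" and L: "L < 1"
    and K: "0 < K"
  shows "filterlim (\<lambda>n. m n - sqrt (2 * ln (K * real n))) at_top sequentially"
proof -
  define L' where "L' = (1 + max L 0) / 2"
  have L': "0 < L'" "L < L'" using L by (auto simp: L'_def)
  define k where "k = 1 / L' - 1"
  have k: "0 < k" using L by (simp add: k_def L'_def field_simps)
  define C where "C = sqrt \<bar>2 * ln (2 * K / p)\<bar>"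
  define s where "s n = sqrt (2 * ln (real (N n)))" for n
  have "filterlim (\<lambda>x::real. sqrt (2 * ln x) * k - C) at_top at_top"
    using k by real_asymp
  moreover have "filterlim (\<lambda>n. real (N n)) at_top sequentially"
    by (rule filterlim_compose[OF filterlim_real_sequentially N])
  ultimately have lower: "filterlim (\<lambda>n. s n * k - C) at_top sequentially"
    unfolding s_def by (rule filterlim_compose)
  have "eventually (\<lambda>n. 1 \<le> N n) sequentially"
    using N by (simp add: filterlim_at_top)
  moreover have "eventually (\<lambda>n. p / 2 < real (N n) / real n) sequentially"
    using p by (intro order_tendstoD(1)[OF frac]) simp
  moreover have "eventually (\<lambda>n. s n / m n < L') sequentially"
    unfolding s_def using ratio L'(2) by (rule order_tendstoD(2))
  ultimately have "eventually (\<lambda>n. s n * k - C \<le> m n - sqrt (2 * ln (K * real n))) sequentially"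
    using m eventually_gt_at_top[of 0]
  proof eventually_elim
    case (elim n)
    (* as n < 2 N / p, the level sqrt (2 ln (K n)) exceeds s n = sqrt (2 ln N) by at most C *)
    have "K * real n \<le> (2 * K / p) * real (N n)"
      using elim(2,5) p K by (simp add: field_simps)
    then have "ln (K * real n) \<le> ln ((2 * K / p) * real (N n))"
      using elim(5) K by (intro ln_mono) auto
    then have "sqrt (2 * ln (K * real n)) \<le> sqrt (2 * ln ((2 * K / p) * real (N n)))"
      by simp
    also have "\<dots> \<le> C + s n"
      unfolding C_def s_def using elim(1) p K by (intro sqrt_ln_mult_le) auto
    finally have crit: "sqrt (2 * ln (K * real n)) \<le> C + s n" .
    have "s n < L' * m n"
      using elim(3,4) by (simp add: s_def divide_less_eq mult.commute)
    then have "s n * k \<le> m n - s n"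
      using L' by (simp add: k_def field_simps)
    with crit show ?case by linarith
  qed
  with lower show ?thesis by (rule filterlim_at_top_mono)
qed

theorem theorem5p3:
  fixes \<alpha> p1 L :: real
    and rho :: "nat \<Rightarrow> nat \<Rightarrow> real"
    and M :: "nat \<Rightarrow> 'a measure"
    and X :: "nat \<Rightarrow> nat \<Rightarrow> 'a \<Rightarrow> real"
    and mu :: "nat \<Rightarrow> nat \<Rightarrow> real"
  assumes alpha: "0 < \<alpha>" "\<alpha> < 1"
    and rho_sym: "\<And>i j. rho i j = rho j i"
    and rho_diag: "\<And>i. rho i i = 1"
    and rho_off: "\<And>i j. i \<noteq> j \<Longrightarrow> \<bar>rho i j\<bar> < 1"
    and rho_psd: "\<And>n (a :: nat \<Rightarrow> real). 0 \<le> (\<Sum>i=1..n. \<Sum>j=1..n. a i * a j * rho i j)"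
    and weak_dep1: "(SUP m\<in>{1..}. rho_lag rho m) < 1"
    and weak_dep2: "rho_lag rho \<in> o(\<lambda>m. 1 / ln (real m))"
    and prob: "\<And>n. prob_space (M n)"
    and gauss: "\<And>n. jointly_gaussian (M n) (X n) (mu n) rho n"
    and n1_inf: "filterlim (\<lambda>n. card (I1 (mu n) n)) at_top sequentially"
    and n1_frac: "(\<lambda>n. real (card (I1 (mu n) n)) / real n) \<longlonglongrightarrow> p1"
    and p1: "0 < p1" "p1 \<le> 1"
    and mu_lim: "(\<lambda>n. sqrt (2 * ln (real (card (I1 (mu n) n))))
                     / Max ((\<lambda>i. \<bar>mu n i\<bar>) ` I1 (mu n) n)) \<longlonglongrightarrow> L"
    and L: "L < 1"
  shows "((\<lambda>n. AnyPwr (M n) (X n) (I1 (mu n) n) (c_Bon (2 * real n) \<alpha>)) \<longlonglongrightarrow> 1) \<and>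
         ((\<lambda>n. AnyPwr (M n) (X n) (I1 (mu n) n) (c_Sid (2 * real n) \<alpha>)) \<longlonglongrightarrow> 1)"
proof -
  define I where "I n = I1 (mu n) n" for n
  have I_sub: "I n \<subseteq> {1..n}" for n by (auto simp: I_def I1_def)
  have "eventually (\<lambda>n. 1 \<le> card (I n)) sequentially"
    using n1_inf by (simp add: filterlim_at_top I_def)
  then have nonempty: "eventually (\<lambda>n. I n \<noteq> {}) sequentially"
    by eventually_elim auto
  then have "eventually (\<lambda>n. 0 < Max ((\<lambda>i. \<bar>mu n i\<bar>) ` I n)) sequentially"
    by eventually_elim (use I_sub finite_subset in \<open>auto simp: Max_gr_iff I_def I1_def\<close>)
  from margin_over_sqrt_ln_at_top[OF n1_inf n1_frac p1(1) this[unfolded I_def] mu_lim L,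
      of "16 / - ln (1 - \<alpha>)"]
  have margin: "filterlim (\<lambda>n. Max ((\<lambda>i. \<bar>mu n i\<bar>) ` I n)
      - sqrt (2 * ln (16 / - ln (1 - \<alpha>) * real n))) at_top sequentially"
    using alpha by (simp flip: I_def)
  have power: "(\<lambda>n. AnyPwr (M n) (X n) (I n) (c n)) \<longlonglongrightarrow> 1"
    if "eventually (\<lambda>n. c n \<le> sqrt (2 * ln (16 / - ln (1 - \<alpha>) * real n))) sequentially" for c
  proof (rule AnyPwr_tendsto_1[OF prob gauss rho_diag I_sub nonempty])
    show "filterlim (\<lambda>n. Max ((\<lambda>i. \<bar>mu n i\<bar>) ` I n) - c n) at_top sequentially"
      using that by (intro filterlim_at_top_mono[OF margin]) (auto elim: eventually_mono)
  qed
  from critical_values_eventually_le[OF alpha] show ?thesis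
    unfolding I_def[symmetric] by (auto intro!: power elim: eventually_mono)
qed

end
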